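(* Let $a_1=0$, $a_{j+1}=a_j+\frac2j$, $\omega_j=(x-a_j)\exp((j-1)x)$, and for $n\ge1$ define $$\mathcal P_n=c_n\exp\Big(-\frac{n(n-1)}{2}x\Big)W(\omega_1,\dots,\omega_n),\qquad c_n=\Big[(n-1)!\prod_{1\le i<j\le n-1}(j-i)\Big]^{-1},$$ where $W$ denotes the Wronskian. Then for every $n\ge1$, $$\mathcal P_n'\mathcal P_{n+2}-\mathcal P_n\mathcal P_{n+2}'-(n+1)\mathcal P_n\mathcal P_{n+2}+(n+1)\mathcal P_{n+1}^2=0 .$$ *)

theory Defs
  imports "HOL-Analysis.Derivative" "Jordan_Normal_Form.Determinant"
begin

text \<open>a_1 = 0, a_(j+1) = a_j + 2/j (j >= 1); the value at index 0 is irrelevant.\<close>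
fun a_seq :: "nat \<Rightarrow> real" where
  "a_seq 0 = 0"
| "a_seq (Suc 0) = 0"
| "a_seq (Suc (Suc j)) = a_seq (Suc j) + 2 / real (Suc j)"

definition omega :: "nat \<Rightarrow> real \<Rightarrow> real" where
  "omega j x = (x - a_seq j) * exp ((real j - 1) * x)"

definition wronskian :: "nat \<Rightarrow> (nat \<Rightarrow> real \<Rightarrow> real) \<Rightarrow> real \<Rightarrow> real" where
  "wronskian n f x = det (mat n n (\<lambda>(i, k). (deriv ^^ i) (f (Suc k)) x))"

definition c_const :: "nat \<Rightarrow> real" where
  "c_const n = inverse (fact (n - 1) *
      (\<Prod>j\<in>{1..n - 1}. \<Prod>i\<in>{1..<j}. real (j - i)))"

definition P :: "nat \<Rightarrow> real \<Rightarrow> real" where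
  "P n x = c_const n * exp (- (real n * (real n - 1) / 2) * x) * wronskian n omega x"

end

theory Submission
  imports Defs "Jordan_Normal_Form.Char_Poly"
begin

(* Write Q_n for the Wronskian of omega_1, ..., omega_n, so that P_n = c_n exp(-n(n-1)x/2) Q_n.
   The recursion for a_j is exactly what makes omega_(j+1)'' = j^2 e^x omega_j, and omega_1' = 1.
   Expanding twice along a constant column therefore turns the Wronskian of omega_1, ..., omega_(m+1)
   with the constant 1 inserted anywhere into +-(m!)^2 e^(mx) Q_m. The Desnanot-Jacobi identity for
   the Wronskian matrix of omega_1, ..., omega_(n+1), 1, omega_(n+2) then yields
     (n+1)^2 e^x Q_(n+1)^2 = Q_n Q_(n+2)' - Q_n' Q_(n+2) - n Q_n Q_(n+2),
   and the claim follows from c_(n+1) = c_n / n! once the exponential weights are put back. *)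

section \<open>Determinants\<close>

lemma det_mat:
  "det (mat n n (\<lambda>(i, j). A i j)) =
     (\<Sum>p | p permutes {0..<n}. of_int (sign p) * (\<Prod>i = 0..<n. A i (p i)))"
  by (subst det_def'[of _ n]) (auto intro!: sum.cong prod.cong simp: permutes_in_image)

lemma has_real_derivative_det:
  assumes "\<And>i j. i < n \<Longrightarrow> j < n \<Longrightarrow> (A i j has_real_derivative A' i j) (at x)"
  shows "((\<lambda>y. det (mat n n (\<lambda>(i, j). A i j y))) has_real_derivative
           (\<Sum>r<n. det (mat n n (\<lambda>(i, j). if i = r then A' i j else A i j x)))) (at x)"
proof -
  let ?S = "{p. p permutes {0..<n}}"
  have row_replaced: "(\<Prod>i<n. if i = r then A' i (p i) else A i (p i) x)
      = A' r (p r) * (\<Prod>i \<in> {..<n} - {r}. A i (p i) x)" if "r < n" for r p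
    using that by (subst prod.remove[of _ r]) (auto intro!: prod.cong)
  have "((\<lambda>y. \<Sum>p\<in>?S. of_int (sign p) * (\<Prod>i = 0..<n. A i (p i) y)) has_real_derivative
      (\<Sum>p\<in>?S. of_int (sign p) * (\<Sum>r = 0..<n. A' r (p r) * (\<Prod>i \<in> {0..<n} - {r}. A i (p i) x)))) (at x)"
    by (intro DERIV_sum DERIV_cmult has_field_derivative_prod) (auto simp: assms permutes_in_image)
  also have "(\<Sum>p\<in>?S. of_int (sign p) * (\<Sum>r = 0..<n. A' r (p r) * (\<Prod>i \<in> {0..<n} - {r}. A i (p i) x)))
      = (\<Sum>r<n. \<Sum>p\<in>?S. of_int (sign p) * (\<Prod>i = 0..<n. if i = r then A' i (p i) else A i (p i) x))"
    unfolding sum_distrib_left atLeast0LessThan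
    by (subst sum.swap) (auto intro!: sum.cong simp: row_replaced)
  finally show ?thesis
    by (simp add: det_mat)
qed

lemma det_mat_2:
  "det (mat 2 2 (\<lambda>(i, j). A i j)) = A 0 0 * A 1 1 - A 0 1 * A 1 0"
proof -
  let ?M = "mat 2 2 (\<lambda>(i, j). A i j)"
  have cofactors: "cofactor ?M 0 0 = A 1 1" "cofactor ?M 1 0 = - A 0 1"
    unfolding cofactor_def by (subst det_single; auto simp: mat_delete_def)+
  have "det ?M = (\<Sum>i<2. ?M $$ (i, 0) * cofactor ?M i 0)"
    by (rule laplace_expansion_column) auto
  then show ?thesis
    using cofactors by (simp add: numeral_2_eq_2)
qed

lemma det_four_block_mat_schur:
  fixes B :: "'a :: idom mat"
  assumes B: "B \<in> carrier_mat k k" and C: "C \<in> carrier_mat k m"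
    and D: "D \<in> carrier_mat m k" and E: "E \<in> carrier_mat m m"
    and B': "B' \<in> carrier_mat k k" and inv: "B * B' = 1\<^sub>m k"
  shows "det (four_block_mat B C D E) = det B * det (E - D * B' * C)"
proof -
  define S where "S = E - D * B' * C"
  have S: "S \<in> carrier_mat m m" and B'C: "B' * C \<in> carrier_mat k m"
    using B' C D E by (auto simp: S_def)
  have "B * (B' * C) = (B * B') * C"
    using B B' C by (rule assoc_mult_mat[symmetric])
  then have "B * (B' * C) = C"
    using C by (simp add: inv)
  moreover have "D * (B' * C) + S = E"
  proof -
    have "D * (B' * C) = D * B' * C"
      using B' C D by (simp add: assoc_mult_mat)
    then show ?thesis
      unfolding S_def by (intro eq_matI) (use B' C D E in auto)
  qed
  ultimately have "four_block_mat B C D E =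
      four_block_mat B (0\<^sub>m k m) D (1\<^sub>m m) * four_block_mat (1\<^sub>m k) (B' * C) (0\<^sub>m m k) S"
    using B D S B'C by (subst mult_four_block_mat) auto
  also have "det \<dots> = det (four_block_mat B (0\<^sub>m k m) D (1\<^sub>m m))
      * det (four_block_mat (1\<^sub>m k) (B' * C) (0\<^sub>m m k) S)"
    using B D S B'C by (intro det_mult[of _ "k + m"]) auto
  also have "\<dots> = det B * det S"
    using det_four_block_mat_upper_right_zero[OF B refl D one_carrier_mat]
      det_four_block_mat_lower_left_zero[OF one_carrier_mat B'C refl S]
    by simp
  finally show ?thesis
    by (simp add: S_def)
qed

definition bordered_mat :: "nat \<Rightarrow> (nat \<Rightarrow> nat \<Rightarrow> 'a) \<Rightarrow> nat \<Rightarrow> nat \<Rightarrow> 'a mat" where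
  "bordered_mat k A r c =
     mat (Suc k) (Suc k) (\<lambda>(i, j). A (if i < k then i else r) (if j < k then j else c))"

lemma desnanot_jacobi_invertible:
  fixes A :: "nat \<Rightarrow> nat \<Rightarrow> 'a :: field"
  assumes invertible: "det (mat k k (\<lambda>(i, j). A i j)) \<noteq> 0"
  shows "det (mat (k + 2) (k + 2) (\<lambda>(i, j). A i j)) * det (mat k k (\<lambda>(i, j). A i j))
    = det (bordered_mat k A k k) * det (bordered_mat k A (k + 1) (k + 1))
      - det (bordered_mat k A (k + 1) k) * det (bordered_mat k A k (k + 1))"
proof -
  define B where "B = mat k k (\<lambda>(i, j). A i j)"
  define B' where "B' = (1 / det B) \<cdot>\<^sub>m adj_mat B"
  have B: "B \<in> carrier_mat k k" and B': "B' \<in> carrier_mat k k"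
    by (simp_all add: B_def B'_def adj_mat(1))
  have inv: "B * B' = 1\<^sub>m k"
    using invertible adj_mat(2)[OF B] unfolding B'_def B_def[symmetric]
    by (subst mult_smult_distrib[OF B adj_mat(1)[OF B]]) auto
  define schur where "schur r c = A r c - (\<Sum>j<k. (\<Sum>i<k. A r i * B' $$ (i, j)) * A j c)" for r c
  have triple_product: "(mat p k (\<lambda>(x, i). R x i) * B' * mat k q (\<lambda>(j, y). K j y)) $$ (x, y)
      = (\<Sum>j<k. (\<Sum>i<k. R x i * B' $$ (i, j)) * K j y)" if "x < p" "y < q" for p q R K x y
    using B' that by (simp add: scalar_prod_def atLeast0LessThan row_def col_def)
  have bordered: "det (bordered_mat k A r c) = det B * schur r c" for r c
  proof -
    have blocks: "bordered_mat k A r c = four_block_mat B (mat k 1 (\<lambda>(i, _). A i c))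
        (mat 1 k (\<lambda>(_, j). A r j)) (mat 1 1 (\<lambda>_. A r c))"
      by (rule eq_matI) (auto simp: bordered_mat_def B_def)
    have "det (bordered_mat k A r c) = det B *
        det (mat 1 1 (\<lambda>_. A r c) - mat 1 k (\<lambda>(_, j). A r j) * B' * mat k 1 (\<lambda>(i, _). A i c))"
      unfolding blocks by (rule det_four_block_mat_schur[OF B _ _ _ B' inv]) auto
    also have "det (mat 1 1 (\<lambda>_. A r c) - mat 1 k (\<lambda>(_, j). A r j) * B' * mat k 1 (\<lambda>(i, _). A i c))
        = schur r c"
      using B' triple_product[of 0 1 0 1 "\<lambda>_ j. A r j" "\<lambda>i _. A i c"]
      by (subst det_single) (auto simp: schur_def)
    finally show ?thesis .
  qed
  have blocks: "mat (k + 2) (k + 2) (\<lambda>(i, j). A i j) = four_block_mat B (mat k 2 (\<lambda>(i, y). A i (k + y)))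
      (mat 2 k (\<lambda>(x, j). A (k + x) j)) (mat 2 2 (\<lambda>(x, y). A (k + x) (k + y)))"
    by (rule eq_matI) (auto simp: B_def)
  have "det (mat (k + 2) (k + 2) (\<lambda>(i, j). A i j)) = det B * det (mat 2 2 (\<lambda>(x, y). A (k + x) (k + y))
      - mat 2 k (\<lambda>(x, j). A (k + x) j) * B' * mat k 2 (\<lambda>(i, y). A i (k + y)))"
    unfolding blocks by (rule det_four_block_mat_schur[OF B _ _ _ B' inv]) auto
  also have "mat 2 2 (\<lambda>(x, y). A (k + x) (k + y))
      - mat 2 k (\<lambda>(x, j). A (k + x) j) * B' * mat k 2 (\<lambda>(i, y). A i (k + y))
      = mat 2 2 (\<lambda>(x, y). schur (k + x) (k + y))"
    using B' triple_product[of _ 2 _ 2 "\<lambda>x j. A (k + x) j" "\<lambda>i y. A i (k + y)"]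
    by (intro eq_matI) (auto simp: schur_def)
  finally have full: "det (mat (k + 2) (k + 2) (\<lambda>(i, j). A i j))
      = det B * (schur k k * schur (k + 1) (k + 1) - schur k (k + 1) * schur (k + 1) k)"
    by (simp add: det_mat_2)
  show ?thesis
    unfolding B_def[symmetric] full bordered by (simp add: algebra_simps)
qed

lemma isCont_eq_off_finite:
  fixes f :: "'a :: {perfect_space, t2_space} \<Rightarrow> 'b :: t2_space"
  assumes cont: "isCont f x" and "finite Z" and off_Z: "\<And>y. y \<notin> Z \<Longrightarrow> f y = c"
  shows "f x = c"
proof -
  have "eventually (\<lambda>y. y \<notin> Z) (at x)"
    using islimpt_finite[OF \<open>finite Z\<close>] by (simp add: islimpt_iff_eventually)
  then have "eventually (\<lambda>y. f y = c) (at x)"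
    by (rule eventually_mono) (rule off_Z)
  then have "(f \<longlongrightarrow> c) (at x)"
    by (rule tendsto_eventually)
  moreover have "(f \<longlongrightarrow> f x) (at x)"
    using cont by (simp add: isCont_def)
  ultimately show ?thesis
    using tendsto_unique[OF at_neq_bot] by blast
qed

lemma desnanot_jacobi:
  fixes A :: "nat \<Rightarrow> nat \<Rightarrow> real"
  shows "det (mat (k + 2) (k + 2) (\<lambda>(i, j). A i j)) * det (mat k k (\<lambda>(i, j). A i j))
    = det (bordered_mat k A k k) * det (bordered_mat k A (k + 1) (k + 1))
      - det (bordered_mat k A (k + 1) k) * det (bordered_mat k A k (k + 1))"
proof -
  \<comment> \<open>Perturb the leading block by \<open>t\<close> times the identity: its determinant is the characteristic
    polynomial of \<open>-B\<close> at \<open>t\<close>, so the invertible case applies for all but finitely many \<open>t\<close>.\<close>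
  define A\<^sub>t where "A\<^sub>t t i j = A i j + t * of_bool (i = j \<and> i < k)" for t i j
  define defect where "defect t =
      det (mat (k + 2) (k + 2) (\<lambda>(i, j). A\<^sub>t t i j)) * det (mat k k (\<lambda>(i, j). A\<^sub>t t i j))
      - (det (bordered_mat k (A\<^sub>t t) k k) * det (bordered_mat k (A\<^sub>t t) (k + 1) (k + 1))
         - det (bordered_mat k (A\<^sub>t t) (k + 1) k) * det (bordered_mat k (A\<^sub>t t) k (k + 1)))" for t
  define B where "B = mat k k (\<lambda>(i, j). A i j)"
  have B: "B \<in> carrier_mat k k"
    by (simp add: B_def)
  have char_poly: "det (mat k k (\<lambda>(i, j). A\<^sub>t t i j)) = poly (char_poly (- B)) t" for t
  proof -
    have "mat k k (\<lambda>(i, j). A\<^sub>t t i j) = - char_matrix (- B) t"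
      by (rule eq_matI) (auto simp: char_matrix_def B_def A\<^sub>t_def)
    then show ?thesis
      using char_poly_matrix[of "- B" k] B by simp
  qed
  have "char_poly (- B) \<noteq> 0"
    using degree_monic_char_poly[of "- B" k] B by auto
  then have finite_singular: "finite {t. det (mat k k (\<lambda>(i, j). A\<^sub>t t i j)) = 0}"
    unfolding char_poly by (rule poly_roots_finite)
  have continuous: "isCont defect 0"
    unfolding defect_def bordered_mat_def det_mat A\<^sub>t_def by (intro continuous_intros)
  have "defect t = 0" if "t \<notin> {t. det (mat k k (\<lambda>(i, j). A\<^sub>t t i j)) = 0}" for t
    using desnanot_jacobi_invertible[of k "A\<^sub>t t"] that unfolding defect_def by simp
  then have "defect 0 = 0"
    by (rule isCont_eq_off_finite[OF continuous finite_singular])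
  moreover have "A\<^sub>t 0 = A"
    by (simp add: A\<^sub>t_def fun_eq_iff)
  ultimately show ?thesis
    unfolding defect_def by simp
qed

section \<open>Smooth real functions\<close>

definition smooth :: "(real \<Rightarrow> real) \<Rightarrow> bool" where
  "smooth f \<longleftrightarrow> (\<forall>n x. (deriv ^^ n) f differentiable (at x))"

lemma has_real_derivative_higher_deriv:
  "smooth f \<Longrightarrow> ((deriv ^^ n) f has_real_derivative (deriv ^^ Suc n) f x) (at x)"
  by (simp add: smooth_def DERIV_deriv_iff_real_differentiable)

lemma higher_deriv_eqI:
  assumes "F 0 = f" and "\<And>n x. (F n has_real_derivative F (Suc n) x) (at x)"
  shows "(deriv ^^ n) f = F n"
proof (induction n)
  case (Suc n)
  show ?case
    using DERIV_imp_deriv[OF assms(2)] by (simp add: Suc.IH fun_eq_iff)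
qed (simp add: assms(1))

lemma smoothI:
  assumes "F 0 = f" and "\<And>n x. (F n has_real_derivative F (Suc n) x) (at x)"
  shows "smooth f"
  using higher_deriv_eqI[OF assms] assms(2) by (auto simp: smooth_def real_differentiable_def)

lemma higher_deriv_const: "(deriv ^^ n) (\<lambda>_. c) = (\<lambda>_. if n = 0 then c else (0 :: real))"
  by (rule higher_deriv_eqI) auto

lemma smooth_const: "smooth (\<lambda>_. c)"
  by (simp add: smooth_def higher_deriv_const)

lemma smooth_minus_const: "smooth (\<lambda>x. x - a)"
  by (rule smoothI[where F = "\<lambda>n. if n = 0 then (\<lambda>x. x - a) else (\<lambda>_. of_bool (n = 1))"])
    (auto intro!: derivative_eq_intros)

lemma smooth_exp: "smooth exp"
  by (rule smoothI[where F = "\<lambda>_. exp"]) (auto intro: DERIV_exp)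

lemma smooth_exp_mult: "smooth (\<lambda>x. exp (c * x))"
  by (rule smoothI[where F = "\<lambda>n x. c ^ n * exp (c * x)"]) (auto intro!: derivative_eq_intros)

lemma higher_deriv_cmult_smooth:
  "smooth f \<Longrightarrow> (deriv ^^ n) (\<lambda>x. c * f x) = (\<lambda>x. c * (deriv ^^ n) f x)"
  by (rule higher_deriv_eqI) (auto intro!: DERIV_cmult has_real_derivative_higher_deriv[simplified])

lemma higher_deriv_mult_smooth:
  assumes "smooth f" "smooth g"
  shows "(deriv ^^ n) (\<lambda>x. f x * g x)
    = (\<lambda>x. \<Sum>i\<le>n. real (n choose i) * (deriv ^^ i) f x * (deriv ^^ (n - i)) g x)"
proof (rule higher_deriv_eqI)
  fix n x
  define a where "a i = (deriv ^^ i) f x" for i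
  define b where "b i = (deriv ^^ i) g x" for i
  have shift: "(\<Sum>i\<le>Suc n. c i * a i * b (Suc n - i))
      = c 0 * a 0 * b (Suc n) + (\<Sum>i\<le>n. c (Suc i) * a (Suc i) * b (n - i))" for c :: "nat \<Rightarrow> real"
    by (subst sum.atMost_Suc_shift) simp
  have pascal: "(\<Sum>i\<le>Suc n. real (Suc n choose i) * a i * b (Suc n - i))
      = (\<Sum>i\<le>n. real (n choose i) * a i * b (Suc (n - i)) + real (n choose i) * a (Suc i) * b (n - i))"
  proof -
    have "(\<Sum>i\<le>Suc n. real (n choose i) * a i * b (Suc n - i))
        = (\<Sum>i\<le>n. real (n choose i) * a i * b (Suc (n - i)))"
      by (auto intro!: sum.cong simp: Suc_diff_le)
    then show ?thesis
      using shift[of "\<lambda>i. real (Suc n choose i)"] shift[of "\<lambda>i. real (n choose i)"]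
      by (simp del: sum.atMost_Suc add: sum.distrib ring_distribs mult.assoc)
  qed
  show "((\<lambda>x. \<Sum>i\<le>n. real (n choose i) * (deriv ^^ i) f x * (deriv ^^ (n - i)) g x)
      has_real_derivative
        (\<Sum>i\<le>Suc n. real (Suc n choose i) * (deriv ^^ i) f x * (deriv ^^ (Suc n - i)) g x)) (at x)"
    unfolding pascal[unfolded a_def b_def]
    by (intro DERIV_sum DERIV_mult' DERIV_cmult has_real_derivative_higher_deriv assms)
qed simp

lemma smooth_mult: "smooth f \<Longrightarrow> smooth g \<Longrightarrow> smooth (\<lambda>x. f x * g x)"
  using higher_deriv_mult_smooth[of f g] by (auto simp: smooth_def)

section \<open>Wronskians\<close>

lemma wronskian_cong:
  "(\<And>k. 1 \<le> k \<Longrightarrow> k \<le> n \<Longrightarrow> f k = g k) \<Longrightarrow> wronskian n f = wronskian n g"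
  unfolding wronskian_def by (intro ext arg_cong[where f = det] eq_matI) auto

lemma has_real_derivative_wronskian:
  assumes "\<And>k. smooth (f k)" and "n \<noteq> 0"
  shows "(wronskian n f has_real_derivative
           det (mat n n (\<lambda>(i, k). (deriv ^^ (if i < n - 1 then i else n)) (f (Suc k)) x))) (at x)"
proof -
  define row_shifted where "row_shifted r = mat n n (\<lambda>(i, k).
      if i = r then (deriv ^^ Suc i) (f (Suc k)) x else (deriv ^^ i) (f (Suc k)) x)" for r
  obtain m where n: "n = Suc m"
    using assms(2) not0_implies_Suc by blast
  have "(wronskian n f has_real_derivative (\<Sum>r<n. det (row_shifted r))) (at x)"
    unfolding wronskian_def[abs_def] row_shifted_def
    by (rule has_real_derivative_det) (intro has_real_derivative_higher_deriv assms)
  \<comment> \<open>Differentiating any row but the last one duplicates the next row.\<close>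
  moreover have "det (row_shifted r) = 0" if "r < m" for r
    by (rule det_identical_rows[of _ n r "Suc r"]) (use that n in \<open>auto simp: row_shifted_def\<close>)
  then have "(\<Sum>r<n. det (row_shifted r)) = det (row_shifted m)"
    by (simp add: n)
  moreover have "row_shifted m
      = mat n n (\<lambda>(i, k). (deriv ^^ (if i < n - 1 then i else n)) (f (Suc k)) x)"
    unfolding row_shifted_def n by (rule eq_matI) auto
  ultimately show ?thesis
    by simp
qed

lemma differentiable_wronskian:
  assumes "\<And>k. smooth (f k)"
  shows "wronskian n f differentiable (at x)"
proof (cases "n = 0")
  case True
  then have "wronskian n f = (\<lambda>_. 1)"
    by (auto simp: wronskian_def fun_eq_iff intro!: det_dim_zero)
  then show ?thesis
    by simp
next
  case False
  then show ?thesis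
    using has_real_derivative_wronskian[where f = f and n = n and x = x] assms
    by (auto simp: real_differentiable_def)
qed

lemma wronskian_jacobi:
  assumes "\<And>j. smooth (f j)"
  shows "wronskian (k + 2) f x * wronskian k f x
    = wronskian (k + 1) f x * deriv (wronskian (k + 1) (f(k + 1 := f (k + 2)))) x
      - deriv (wronskian (k + 1) f) x * wronskian (k + 1) (f(k + 1 := f (k + 2))) x"
proof -
  define A where "A i j = (deriv ^^ i) (f (Suc j)) x" for i j
  define g where "g = f(k + 1 := f (k + 2))"
  have smooth_g: "smooth (g j)" for j
    using assms by (simp add: g_def)
  have "wronskian (k + 2) f x = det (mat (k + 2) (k + 2) (\<lambda>(i, j). A i j))"
    "wronskian k f x = det (mat k k (\<lambda>(i, j). A i j))"
    by (simp_all add: wronskian_def A_def)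
  moreover have "wronskian (k + 1) f x = det (bordered_mat k A k k)"
    "wronskian (k + 1) g x = det (bordered_mat k A k (k + 1))"
    unfolding wronskian_def bordered_mat_def A_def g_def
    by (auto intro!: arg_cong[where f = det] eq_matI simp: less_Suc_eq)
  moreover have "deriv (wronskian (k + 1) f) x = det (bordered_mat k A (k + 1) k)"
    "deriv (wronskian (k + 1) g) x = det (bordered_mat k A (k + 1) (k + 1))"
    using has_real_derivative_wronskian[where f = f and n = "k + 1" and x = x, OF assms]
      has_real_derivative_wronskian[where f = g and n = "k + 1" and x = x, OF smooth_g]
    unfolding bordered_mat_def A_def g_def
    by (auto dest!: DERIV_imp_deriv intro!: arg_cong[where f = det] eq_matI simp: less_Suc_eq)
  ultimately show ?thesis
    using desnanot_jacobi[of k A] by (simp add: g_def)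
qed

lemma wronskian_const_column:
  assumes "p \<le> m" and "f (Suc p) = (\<lambda>_. c)"
  shows "wronskian (Suc m) f x
    = (- 1) ^ p * c * wronskian m (\<lambda>j. deriv (f (if j \<le> p then j else Suc j))) x"
proof -
  define M where "M = mat (Suc m) (Suc m) (\<lambda>(i, k). (deriv ^^ i) (f (Suc k)) x)"
  have "det M = (\<Sum>i<Suc m. M $$ (i, p) * cofactor M i p)"
    by (rule laplace_expansion_column) (use assms in \<open>auto simp: M_def\<close>)
  also have "\<dots> = (\<Sum>i<Suc m. if i = 0 then c * cofactor M i p else 0)"
    using assms by (intro sum.cong) (auto simp: M_def higher_deriv_const)
  also have "\<dots> = c * cofactor M 0 p"
    by simp
  finally have "det M = c * ((- 1) ^ p * det (mat_delete M 0 p))"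
    by (simp add: cofactor_def)
  moreover have "mat_delete M 0 p
      = mat m m (\<lambda>(i, k). (deriv ^^ i) (deriv (f (if Suc k \<le> p then Suc k else Suc (Suc k)))) x)"
    by (rule eq_matI) (auto simp: M_def mat_delete_def funpow_swap1)
  ultimately show ?thesis
    by (simp add: M_def wronskian_def)
qed

lemma wronskian_scale:
  assumes "\<And>k. smooth (f k)"
  shows "wronskian m (\<lambda>k x. c k * f k x) x = (\<Prod>k = 1..m. c k) * wronskian m f x"
proof -
  define W where "W = mat m m (\<lambda>(i, k). (deriv ^^ i) (f (Suc k)) x)"
  define D where "D = mat m m (\<lambda>(i, j). if i = j then c (Suc j) else 0)"
  have "mat m m (\<lambda>(i, k). (deriv ^^ i) (\<lambda>x. c (Suc k) * f (Suc k) x) x) = W * D"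
    by (rule eq_matI)
      (auto simp: W_def D_def higher_deriv_cmult_smooth assms scalar_prod_def if_distrib cong: if_cong)
  moreover have "det D = (\<Prod>k = 1..m. c k)"
    by (subst det_upper_triangular[of _ m])
      (auto simp: D_def prod_list_diag_prod prod.atLeast1_atMost_eq atLeast0LessThan)
  ultimately show ?thesis
    by (simp add: wronskian_def det_mult[of _ m] W_def D_def)
qed

lemma wronskian_mult:
  assumes "smooth g" and "\<And>k. smooth (f k)"
  shows "wronskian m (\<lambda>k x. g x * f k x) x = g x ^ m * wronskian m f x"
proof -
  define W where "W = mat m m (\<lambda>(i, k). (deriv ^^ i) (f (Suc k)) x)"
  define L where
    "L = mat m m (\<lambda>(i, t). if t \<le> i then real (i choose t) * (deriv ^^ (i - t)) g x else 0)"
  have "mat m m (\<lambda>(i, k). (deriv ^^ i) (\<lambda>x. g x * f (Suc k) x) x) = L * W"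
  proof (rule eq_matI)
    fix i k
    assume "i < dim_row (L * W)" "k < dim_col (L * W)"
    then have i: "i < m" and "k < m"
      by (simp_all add: L_def W_def)
    have "(deriv ^^ i) (\<lambda>x. g x * f (Suc k) x) x
        = (\<Sum>t\<le>i. real (i choose t) * (deriv ^^ t) (f (Suc k)) x * (deriv ^^ (i - t)) g x)"
      using higher_deriv_mult_smooth[OF assms(2) assms(1)] by (simp add: mult.commute)
    also have "\<dots> = (\<Sum>t<m. L $$ (i, t) * W $$ (t, k))"
      using i \<open>k < m\<close>
      by (intro sum.mono_neutral_cong_left) (auto simp: L_def W_def)
    finally show "mat m m (\<lambda>(i, k). (deriv ^^ i) (\<lambda>x. g x * f (Suc k) x) x) $$ (i, k)
        = (L * W) $$ (i, k)"
      using i \<open>k < m\<close> by (simp add: L_def W_def scalar_prod_def atLeast0LessThan)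
  qed (simp_all add: L_def W_def)
  moreover have "det L = g x ^ m"
    by (subst det_lower_triangular[of m]) (auto simp: L_def prod_list_diag_prod)
  ultimately show ?thesis
    by (simp add: wronskian_def det_mult[of _ m] W_def L_def)
qed

section \<open>The functions \<open>omega\<close> and \<open>P\<close>\<close>

lemma smooth_omega: "smooth (omega j)"
  unfolding omega_def[abs_def] by (intro smooth_mult smooth_minus_const smooth_exp_mult)

lemma deriv_omega_1: "deriv (omega 1) = (\<lambda>_. 1)"
  unfolding omega_def[abs_def] by (intro ext DERIV_imp_deriv) (auto intro!: derivative_eq_intros)

lemma deriv2_omega_Suc:
  assumes "j \<ge> 1"
  shows "deriv (deriv (omega (Suc j))) = (\<lambda>x. real j ^ 2 * (exp x * omega j x))"
proof
  fix x
  define a where "a = a_seq (Suc j)"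
  have "deriv (omega (Suc j)) = (\<lambda>x. (1 + real j * (x - a)) * exp (real j * x))"
    unfolding omega_def[abs_def] a_def
    by (intro ext DERIV_imp_deriv) (auto intro!: derivative_eq_intros simp: algebra_simps)
  moreover have "deriv (\<lambda>x. (1 + real j * (x - a)) * exp (real j * x))
      = (\<lambda>x. (2 * real j + real j ^ 2 * (x - a)) * exp (real j * x))"
    by (intro ext DERIV_imp_deriv)
      (auto intro!: derivative_eq_intros simp: algebra_simps power2_eq_square)
  moreover have "real j * a = real j * a_seq j + 2"
    using assms by (cases j) (simp_all add: a_def field_simps)
  then have "2 * real j + real j ^ 2 * (x - a) = real j ^ 2 * (x - a_seq j)"
    by (simp add: power2_eq_square algebra_simps)
  moreover have "exp x * omega j x = (x - a_seq j) * exp (real j * x)"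
    unfolding omega_def by (simp add: mult.left_commute flip: exp_add) (simp add: algebra_simps)
  ultimately show "deriv (deriv (omega (Suc j))) x = real j ^ 2 * (exp x * omega j x)"
    by simp
qed

lemma wronskian_omega_insert_one:
  assumes "p \<le> Suc m"
  shows "wronskian (m + 2)
      (\<lambda>j. if j \<le> p then omega j else if j = Suc p then (\<lambda>_. 1) else omega (j - 1)) x
    = (- 1) ^ p * fact m ^ 2 * exp (real m * x) * wronskian m omega x"
proof -
  let ?h = "\<lambda>j. if j \<le> p then omega j else if j = Suc p then (\<lambda>_. 1) else omega (j - 1)"
  let ?h' = "\<lambda>j. deriv (?h (if j \<le> p then j else Suc j))"
  have "wronskian (Suc (Suc m)) ?h x = (- 1) ^ p * 1 * wronskian (Suc m) ?h' x"
    by (rule wronskian_const_column) (use assms in auto)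
  also have "wronskian (Suc m) ?h' = wronskian (Suc m) (\<lambda>j. deriv (omega j))"
    by (rule wronskian_cong) auto
  also have "wronskian (Suc m) (\<lambda>j. deriv (omega j)) x
      = (- 1) ^ 0 * 1 * wronskian m (\<lambda>j. deriv (deriv (omega (if j \<le> 0 then j else Suc j)))) x"
    by (rule wronskian_const_column) (simp_all add: deriv_omega_1 flip: One_nat_def)
  also have "wronskian m (\<lambda>j. deriv (deriv (omega (if j \<le> 0 then j else Suc j))))
      = wronskian m (\<lambda>j x. real j ^ 2 * (exp x * omega j x))"
    by (rule wronskian_cong) (simp add: deriv2_omega_Suc)
  also have "wronskian m (\<lambda>j x. real j ^ 2 * (exp x * omega j x)) x
      = (\<Prod>j = 1..m. real j ^ 2) * (exp x ^ m * wronskian m omega x)"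
    by (simp add: wronskian_scale wronskian_mult smooth_mult smooth_exp smooth_omega)
  also have "(\<Prod>j = 1..m. real j ^ 2) = fact m ^ 2"
    by (simp add: fact_prod prod_power_distrib)
  finally show ?thesis
    by (simp add: exp_of_nat_mult)
qed

lemma wronskian_omega_recurrence:
  "wronskian n omega x * deriv (wronskian (n + 2) omega) x
   - deriv (wronskian n omega) x * wronskian (n + 2) omega x
   - real n * wronskian n omega x * wronskian (n + 2) omega x
   = (real n + 1) ^ 2 * exp x * wronskian (n + 1) omega x ^ 2"
proof -
  define h where "h j = (if j \<le> Suc n then omega j
      else if j = Suc (Suc n) then (\<lambda>_. 1) else omega (j - 1))" for j
  define sign where "sign = (- 1 :: real) ^ Suc n"
  define K where "K = sign * fact n ^ 2 * exp (real n * x)"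
  have smooth_h: "smooth (h j)" for j
    by (simp add: h_def smooth_omega smooth_const)
  have "wronskian (Suc n + 2) h x
      = sign * fact (Suc n) ^ 2 * exp (real (Suc n) * x) * wronskian (Suc n) omega x"
    unfolding h_def sign_def by (rule wronskian_omega_insert_one) simp
  moreover have "wronskian (n + 2) h = (\<lambda>y. sign * fact n ^ 2 * exp (real n * y) * wronskian n omega y)"
    unfolding h_def sign_def by (intro ext wronskian_omega_insert_one) simp
  moreover have "wronskian (Suc n) h = wronskian (Suc n) omega"
    by (rule wronskian_cong) (simp add: h_def)
  moreover have "wronskian (n + 2) (h(Suc (Suc n) := h (Suc n + 2))) = wronskian (n + 2) omega"
    by (rule wronskian_cong) (simp add: h_def)
  moreover have "deriv (\<lambda>y. sign * fact n ^ 2 * exp (real n * y) * wronskian n omega y) x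
      = K * (real n * wronskian n omega x + deriv (wronskian n omega) x)"
    using differentiable_wronskian[of omega n x, OF smooth_omega] unfolding K_def
    by (intro DERIV_imp_deriv)
      (auto intro!: derivative_eq_intros simp: DERIV_deriv_iff_real_differentiable algebra_simps)
  ultimately have "K * ((real n + 1) ^ 2 * exp x * wronskian (n + 1) omega x ^ 2)
      = K * (wronskian n omega x * deriv (wronskian (n + 2) omega) x
         - deriv (wronskian n omega) x * wronskian (n + 2) omega x
         - real n * wronskian n omega x * wronskian (n + 2) omega x)"
    using wronskian_jacobi[of h "Suc n" x, OF smooth_h] unfolding K_def
    by (simp add: exp_add algebra_simps power2_eq_square)
  moreover have "K \<noteq> 0"
    by (simp add: K_def sign_def)
  ultimately show ?thesis
    by simp
qed

lemma c_const_Suc: "c_const (Suc n) = c_const n / fact n"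
proof -
  have inner: "(\<Prod>i\<in>{1..<j}. real (j - i)) = fact (j - 1)" for j
  proof -
    have "(\<Prod>i\<in>{1..<j}. real (j - i)) = (\<Prod>t\<in>{1..j - 1}. real t)"
      by (rule prod.reindex_bij_witness[of _ "\<lambda>t. j - t" "\<lambda>i. j - i"]) auto
    then show ?thesis
      by (simp add: fact_prod)
  qed
  have c_const_Suc_eq: "c_const (Suc m) = inverse (fact m * (\<Prod>j = 1..m. fact (j - 1)))" for m
    unfolding c_const_def inner by simp
  show ?thesis
  proof (cases n)
    case 0
    then show ?thesis
      by (simp add: c_const_def)
  next
    case (Suc m)
    then show ?thesis
      by (simp add: c_const_Suc_eq prod.cl_ivl_Suc inverse_eq_divide)
  qed
qed

definition P_weight :: "nat \<Rightarrow> real \<Rightarrow> real" where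
  "P_weight m x = c_const m * exp (- (real m * (real m - 1) / 2) * x)"

lemma P_eq_weight: "P m x = P_weight m x * wronskian m omega x"
  by (simp add: P_def P_weight_def)

lemma deriv_P:
  "deriv (P m) x
    = P_weight m x * (deriv (wronskian m omega) x - real m * (real m - 1) / 2 * wronskian m omega x)"
proof -
  define a where "a = real m * (real m - 1) / 2"
  have "(wronskian m omega has_real_derivative deriv (wronskian m omega) x) (at x)"
    using differentiable_wronskian[of omega m x, OF smooth_omega]
    by (simp add: DERIV_deriv_iff_real_differentiable)
  then have "(P m has_real_derivative c_const m * exp (- a * x)
      * (deriv (wronskian m omega) x - a * wronskian m omega x)) (at x)"
    unfolding P_def[abs_def] a_def[symmetric]
    by (auto intro!: derivative_eq_intros simp: algebra_simps)
  then show ?thesis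
    unfolding P_weight_def a_def by (rule DERIV_imp_deriv)
qed

lemma P_weight_square:
  "real (n + 1) * P_weight (n + 1) x ^ 2 = (real n + 1) ^ 2 * exp x * P_weight n x * P_weight (n + 2) x"
proof -
  define e where "e m = exp (- (real m * (real m - 1) / 2) * x)" for m
  have e: "e (n + 1) ^ 2 = exp x * e n * e (n + 2)"
    unfolding e_def by (simp add: power2_eq_square flip: exp_add) (simp add: field_simps)
  have "c_const n = fact n * c_const (n + 1)"
    by (simp add: c_const_Suc)
  moreover have "c_const (n + 1) = fact (n + 1) * c_const (n + 2)"
    using c_const_Suc[of "n + 1"] by (simp del: fact_Suc)
  ultimately have "c_const (n + 1) ^ 2 = (real n + 1) * c_const n * c_const (n + 2)"
    by (simp add: power2_eq_square algebra_simps)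
  then show ?thesis
    unfolding P_weight_def e_def[symmetric] power_mult_distrib e
    by (simp add: power2_eq_square algebra_simps)
qed

theorem lemma6p3:
  fixes n :: nat and x :: real
  assumes "n \<ge> 1"
  shows "deriv (P n) x * P (n + 2) x - P n x * deriv (P (n + 2)) x
         - real (n + 1) * P n x * P (n + 2) x + real (n + 1) * (P (n + 1) x)^2 = 0"
proof -
  \<comment> \<open>The identity holds for \<open>n = 0\<close> as well.\<close>
  define Q where "Q m = wronskian m omega x" for m
  define Q' where "Q' m = deriv (wronskian m omega) x" for m
  define w where "w m = P_weight m x" for m
  have "deriv (P n) x * P (n + 2) x - P n x * deriv (P (n + 2)) x
      - real (n + 1) * P n x * P (n + 2) x + real (n + 1) * (P (n + 1) x)^2
      = w n * w (n + 2) * (Q' n * Q (n + 2) - Q n * Q' (n + 2) + real n * Q n * Q (n + 2))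
        + real (n + 1) * w (n + 1) ^ 2 * Q (n + 1) ^ 2"
    unfolding P_eq_weight deriv_P w_def[symmetric] Q_def[symmetric] Q'_def[symmetric]
    by (simp add: field_simps power2_eq_square)
  also have "\<dots> = w n * w (n + 2) * (Q' n * Q (n + 2) - Q n * Q' (n + 2) + real n * Q n * Q (n + 2)
      + (real n + 1) ^ 2 * exp x * Q (n + 1) ^ 2)"
    unfolding w_def P_weight_square by (simp add: algebra_simps)
  also have "\<dots> = 0"
    using wronskian_omega_recurrence[of n x] by (simp add: Q_def Q'_def algebra_simps)
  finally show ?thesis .
qed

end
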